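(* Under the conical assumption (all dependent variables have vanishing covariant derivative in the radial direction $r$, measured from the cone apex), the steady compressible Euler equations in a 3D Euclidean space with coordinates $(\xi^1,\xi^2,r)$, where $r$ is orthogonal to the surface coordinates and has unit scale, reduce to the following system on the surface of the unit sphere: \begin{gather*} \frac{\partial}{\partial \xi^\beta}\left(\rho\sqrt{g}v^\beta\right) + 2\rho \sqrt{g}V^3 = 0,\\ \frac{\partial }{\partial\xi^\beta}\left(\sqrt{g}\left[\rho v^\alpha v^\beta + g^{\alpha\beta}P\right]\right) + \overset{(g)}{\Gamma}{}_{\gamma}{}^{\alpha}{}_{\nu}\,\sqrt{g}\left[\rho v^\gamma v^\nu+g^{\gamma\nu}P\right] + 3\rho\sqrt{g}v^\alpha V^3 = 0,\\ v^\alpha\frac{\partial V^3}{\partial \xi^\alpha} - q^2_c = 0,\\ \frac{\partial}{\partial \xi^\beta}\left( \sqrt{g}\left[\rho E+P\right] v^\beta \right) + 2\sqrt{g}\left[\rho E+P\right] V^3 =0. \end{gather*}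
   Context: Einstein summation is used; Greek indices take values 1,2. $\rho$ is density, $v^\beta = r\tilde v^\beta$ are the rescaled (r-independent) surface velocity components, $V^3$ is the radial velocity component, $E=e+\frac12|\mathbf V|^2$ is total specific energy with $e$ the specific thermal energy, $P=P(\rho,e)$ the pressure, $g_{\alpha\beta}=\tilde g_{\alpha\beta}/r^2$ the metric of the unit sphere in arbitrary surface coordinates $\xi^\alpha$ (with $r$-dependence removed), $g^{\alpha\beta}$ its inverse, $g$ its determinant, $q_c=\sqrt{g_{\alpha\beta}v^\alpha v^\beta}$ the crossflow speed, and $\overset{(g)}{\Gamma}{}_{\gamma}{}^{\alpha}{}_{\nu}$ the Christoffel symbol (of the second kind, upper index $\alpha$, lower indices $\gamma,\nu$) of the metric $g_{\alpha\beta}$. The starting equations are the steady Euler equations in coordinate-free form: $(\rho\sqrt{G}V^j)_{|j}=0$, $(\sqrt{G}[\rho V^iV^j+G^{ij}P])_{|j}=0$, $(\sqrt{G}[\rho E+P]V^j)_{|j}=0$, with $G_{ij}$ the 3D metric and $(\cdot)_{|j}$ the covariant derivative. *)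

theory Defs
  imports "HOL-Analysis.Analysis"
begin

text \<open>Indices: surface indices alpha, beta in {1,2}; radial index 3.
  Surface points xi = (xi1, xi2) :: real * real;
  space points (xi1, xi2, r) :: real * real * real.\<close>

type_synonym pt2 = "real \<times> real"
type_synonym pt3 = "real \<times> real \<times> real"

definition pd2 :: "(pt2 \<Rightarrow> real) \<Rightarrow> nat \<Rightarrow> pt2 \<Rightarrow> real" where
  "pd2 f a x = deriv (\<lambda>t. f (fst x + (if a = 1 then t else 0),
                                snd x + (if a = 2 then t else 0))) 0"

definition pd3 :: "(pt3 \<Rightarrow> real) \<Rightarrow> nat \<Rightarrow> pt3 \<Rightarrow> real" where
  "pd3 f i x = deriv (\<lambda>t. f (fst x + (if i = 1 then t else 0),
                                fst (snd x) + (if i = 2 then t else 0),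
                                snd (snd x) + (if i = 3 then t else 0))) 0"

definition detn :: "nat \<Rightarrow> (nat \<Rightarrow> nat \<Rightarrow> real) \<Rightarrow> real" where
  "detn n A = (\<Sum>p | p permutes {1..n}. of_int (sign p) * (\<Prod>i\<in>{1..n}. A i (p i)))"

definition inv_metric :: "nat \<Rightarrow> (nat \<Rightarrow> nat \<Rightarrow> real) \<Rightarrow> nat \<Rightarrow> nat \<Rightarrow> real" where
  "inv_metric n A = (THE h. (\<forall>i\<in>{1..n}. \<forall>k\<in>{1..n}.
        (\<Sum>j\<in>{1..n}. A i j * h j k) = (if i = k then 1 else 0))
      \<and> (\<forall>i k. \<not> (i \<in> {1..n} \<and> k \<in> {1..n}) \<longrightarrow> h i k = 0))"

text \<open>Christoffel symbol of the second kind  Gamma_j^i_k  (upper index i,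
  lower indices j, k) of a metric M in n dimensions, w.r.t. the partial
  derivative operator D.\<close>

definition christoffel ::
  "nat \<Rightarrow> ('p \<Rightarrow> nat \<Rightarrow> nat \<Rightarrow> real) \<Rightarrow> (('p \<Rightarrow> real) \<Rightarrow> nat \<Rightarrow> 'p \<Rightarrow> real)
     \<Rightarrow> 'p \<Rightarrow> nat \<Rightarrow> nat \<Rightarrow> nat \<Rightarrow> real" where
  "christoffel n M D x i j k =
     (1/2) * (\<Sum>l\<in>{1..n}. inv_metric n (M x) i l *
        (D (\<lambda>y. M y l k) j x + D (\<lambda>y. M y l j) k x - D (\<lambda>y. M y j k) l x))"

abbreviation Gam3 :: "(pt3 \<Rightarrow> nat \<Rightarrow> nat \<Rightarrow> real) \<Rightarrow> pt3 \<Rightarrow> nat \<Rightarrow> nat \<Rightarrow> nat \<Rightarrow> real" where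
  "Gam3 G \<equiv> christoffel 3 G pd3"

abbreviation Gam2 :: "(pt2 \<Rightarrow> nat \<Rightarrow> nat \<Rightarrow> real) \<Rightarrow> pt2 \<Rightarrow> nat \<Rightarrow> nat \<Rightarrow> nat \<Rightarrow> real" where
  "Gam2 g \<equiv> christoffel 2 g pd2"

definition cone_metric :: "(pt2 \<Rightarrow> nat \<Rightarrow> nat \<Rightarrow> real) \<Rightarrow> pt3 \<Rightarrow> nat \<Rightarrow> nat \<Rightarrow> real" where
  "cone_metric g x i j =
     (if i \<in> {1,2} \<and> j \<in> {1,2} then (snd (snd x))\<^sup>2 * g (fst x, fst (snd x)) i j
      else if i = 3 \<and> j = 3 then 1 else 0)"

text \<open>Covariant derivative of a vector density W^j (weight 1), contracted: W^j_{|j}.\<close>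

definition cdiv_dens1 ::
  "(pt3 \<Rightarrow> nat \<Rightarrow> nat \<Rightarrow> real) \<Rightarrow> (pt3 \<Rightarrow> nat \<Rightarrow> real) \<Rightarrow> pt3 \<Rightarrow> real" where
  "cdiv_dens1 G W x = (\<Sum>j\<in>{1..3}. pd3 (\<lambda>y. W y j) j x
      + (\<Sum>k\<in>{1..3}. Gam3 G x j j k * W x k - Gam3 G x k k j * W x j))"

text \<open>Covariant derivative of a rank-2 contravariant tensor density T^{ij}
  (weight 1), contracted on the second index: T^{ij}_{|j}.\<close>

definition cdiv_dens2 ::
  "(pt3 \<Rightarrow> nat \<Rightarrow> nat \<Rightarrow> real) \<Rightarrow> (pt3 \<Rightarrow> nat \<Rightarrow> nat \<Rightarrow> real) \<Rightarrow> pt3 \<Rightarrow> nat \<Rightarrow> real" where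
  "cdiv_dens2 G T x i = (\<Sum>j\<in>{1..3}. pd3 (\<lambda>y. T y i j) j x
      + (\<Sum>k\<in>{1..3}. Gam3 G x i j k * T x k j + Gam3 G x j j k * T x i k
                      - Gam3 G x k k j * T x i j))"

end

theory Submission
  imports Defs
begin

text \<open>In the coordinates \<open>(\<xi>\<^sup>1, \<xi>\<^sup>2, r)\<close> the metric is \<open>G = diag(r\<^sup>2 g, 1)\<close>, so
  \<open>\<surd>G = r\<^sup>2 \<surd>g\<close>, \<open>G\<^sup>-\<^sup>1 = diag(g\<^sup>-\<^sup>1/r\<^sup>2, 1)\<close>, the Christoffel symbols with only surface
  indices are those of \<open>g\<close>, and the only other non-vanishing ones are
  \<open>\<Gamma>\<^sub>\<beta>\<^sup>\<alpha>\<^sub>3 = \<Gamma>\<^sub>3\<^sup>\<alpha>\<^sub>\<beta> = \<delta>\<^sup>\<alpha>\<^sub>\<beta>/r\<close> and \<open>\<Gamma>\<^sub>\<alpha>\<^sup>3\<^sub>\<beta> = -r g\<^sub>\<alpha>\<^sub>\<beta>\<close>.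
  Integrating the conical assumption along the rays shows that \<open>\<rho>\<close>, \<open>e\<close>, \<open>V\<^sup>3\<close> and
  \<open>r V\<^sup>\<alpha>\<close> do not depend on \<open>r\<close>. Hence every flux of the Euler equations is a power of
  \<open>r\<close> times a field on the unit sphere, and each three-dimensional divergence is a power of
  \<open>r\<close> times the corresponding surface expression. Since \<open>r\<close>, \<open>\<rho>\<close> and \<open>\<surd>g\<close> do not
  vanish, the two systems are equivalent.\<close>

lemma sum_1_2: "(\<Sum>j\<in>{1..2::nat}. f j) = f 1 + (f 2 :: 'a::comm_monoid_add)"
proof -
  have "{1..2::nat} = {1, 2}" by auto
  then show ?thesis by (simp add: add.assoc)
qed

lemma sum_1_3: "(\<Sum>j\<in>{1..3::nat}. f j) = f 1 + f 2 + (f 3 :: 'a::comm_monoid_add)"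
proof -
  have "{1..3::nat} = {1, 2, 3}" by auto
  then show ?thesis by (simp add: add.assoc)
qed

lemma ball_1_2: "(\<forall>i\<in>{1..2::nat}. Q i) \<longleftrightarrow> Q 1 \<and> Q 2"
proof -
  have "{1..2::nat} = {1, 2}" by auto
  then show ?thesis by simp
qed

lemma ball_1_3: "(\<forall>i\<in>{1..3::nat}. Q i) \<longleftrightarrow> Q 1 \<and> Q 2 \<and> Q 3"
proof -
  have "{1..3::nat} = {1, 2, 3}" by auto
  then show ?thesis by simp
qed

lemma pd2_has_real_derivative:
  fixes F :: "pt2 \<Rightarrow> real"
  assumes "F differentiable (at \<xi>)"
  shows "((\<lambda>t. F (fst \<xi> + (if i = 1 then t else 0), snd \<xi> + (if i = 2 then t else 0)))
           has_real_derivative pd2 F i \<xi>) (at 0)"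
proof -
  let ?line = "\<lambda>t::real. (fst \<xi> + (if i = 1 then t else 0), snd \<xi> + (if i = 2 then t else 0))"
  have "?line differentiable (at 0)"
    by (cases "i = 1"; cases "i = 2") (auto intro!: derivative_intros)
  moreover have "F differentiable (at (?line 0))"
    using assms by simp
  ultimately have "(F \<circ> ?line) differentiable (at 0)"
    by (rule differentiable_chain_at)
  then show ?thesis
    unfolding pd2_def by (simp add: o_def DERIV_deriv_iff_real_differentiable)
qed

lemma pd2_mult:
  fixes F H :: "pt2 \<Rightarrow> real"
  assumes "F differentiable (at \<xi>)" "H differentiable (at \<xi>)"
  shows "pd2 (\<lambda>y. F y * H y) i \<xi> = F \<xi> * pd2 H i \<xi> + H \<xi> * pd2 F i \<xi>"
proof -
  have "((\<lambda>t. F (fst \<xi> + (if i = 1 then t else 0), snd \<xi> + (if i = 2 then t else 0)) *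
            H (fst \<xi> + (if i = 1 then t else 0), snd \<xi> + (if i = 2 then t else 0)))
         has_real_derivative (pd2 F i \<xi> * H \<xi> + pd2 H i \<xi> * F \<xi>)) (at 0)"
    using DERIV_mult[OF pd2_has_real_derivative[OF assms(1)] pd2_has_real_derivative[OF assms(2)]]
    by simp
  then show ?thesis
    unfolding pd2_def[of "\<lambda>y. F y * H y"] by (simp add: DERIV_imp_deriv algebra_simps)
qed

lemma pd3_const: "pd3 (\<lambda>y. c) i x = 0"
  unfolding pd3_def by simp

lemma pd3_cong_on_open:
  fixes f f' :: "pt3 \<Rightarrow> real"
  assumes "open S" "x \<in> S" "\<And>y. y \<in> S \<Longrightarrow> f y = f' y"
  shows "pd3 f i x = pd3 f' i x"
proof -
  let ?line = "\<lambda>t::real. (fst x + (if i = 1 then t else 0), fst (snd x) + (if i = 2 then t else 0),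
                          snd (snd x) + (if i = 3 then t else 0))"
  have "isCont ?line 0"
    by (cases "i = 1"; cases "i = 2"; cases "i = 3") (auto intro!: continuous_intros)
  moreover have "?line 0 \<in> S"
    using assms(2) by simp
  ultimately have "eventually (\<lambda>t. ?line t \<in> S) (nhds 0)"
    using assms(1) by (simp add: isCont_def tendsto_def eventually_nhds_conv_at)
  then have "eventually (\<lambda>t. f (?line t) = f' (?line t)) (nhds 0)"
    by eventually_elim (use assms(3) in auto)
  then show ?thesis
    unfolding pd3_def by (rule deriv_cong_ev) simp
qed

lemma pd3_radial_has_real_derivative:
  fixes f :: "pt3 \<Rightarrow> real"
  assumes "f differentiable (at (a, b, s))"
  shows "((\<lambda>u. f (a, b, u)) has_real_derivative pd3 f 3 (a, b, s)) (at s)"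
proof -
  have "(\<lambda>t::real. (a, b, s + t)) differentiable (at 0)"
    by (auto intro!: derivative_intros)
  then have "(\<lambda>t. f (a, b, s + t)) differentiable (at 0)"
    using differentiable_compose[of f "\<lambda>t::real. (a, b, s + t)" 0] assms by simp
  then have "((\<lambda>t. f (a, b, s + t)) has_real_derivative pd3 f 3 (a, b, s)) (at 0)"
    unfolding pd3_def by (simp add: DERIV_deriv_iff_real_differentiable)
  then show ?thesis
    using DERIV_shift[of "\<lambda>u. f (a, b, u)" _ 0 s] by (simp add: add.commute)
qed

lemma pd3_separable_tangential:
  fixes F :: "pt2 \<Rightarrow> real"
  assumes "i \<in> {1, 2}" "F differentiable (at (fst x, fst (snd x)))"
  shows "pd3 (\<lambda>y. c (snd (snd y)) * F (fst y, fst (snd y))) i x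
           = c (snd (snd x)) * pd2 F i (fst x, fst (snd x))"
proof -
  have "((\<lambda>t. c (snd (snd x)) * F (fst x + (if i = 1 then t else 0), fst (snd x) + (if i = 2 then t else 0)))
         has_real_derivative c (snd (snd x)) * pd2 F i (fst x, fst (snd x))) (at 0)"
    using DERIV_cmult[OF pd2_has_real_derivative[OF assms(2), of i]] by simp
  then show ?thesis
    unfolding pd3_def using assms(1) by (auto intro!: DERIV_imp_deriv)
qed

lemma pd3_separable_radial:
  fixes F :: "pt2 \<Rightarrow> real"
  assumes "(c has_real_derivative c') (at (snd (snd x)))"
  shows "pd3 (\<lambda>y. c (snd (snd y)) * F (fst y, fst (snd y))) 3 x = c' * F (fst x, fst (snd x))"
proof -
  have "((\<lambda>t. c (t + snd (snd x))) has_real_derivative c') (at 0)"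
    using assms DERIV_shift[of c c' 0 "snd (snd x)"] by simp
  then have "((\<lambda>t. c (snd (snd x) + t) * F (fst x, fst (snd x)))
              has_real_derivative c' * F (fst x, fst (snd x))) (at 0)"
    using DERIV_cmult_right by (simp add: add.commute)
  then show ?thesis
    unfolding pd3_def by (auto intro!: DERIV_imp_deriv)
qed

lemma differentiable_transform_open:
  assumes "f differentiable (at x)" "open S" "x \<in> S" "\<And>y. y \<in> S \<Longrightarrow> f y = f' y"
  shows "f' differentiable (at x)"
  using assms has_derivative_transform_within_open[of f _ x UNIV S f']
  unfolding differentiable_def by auto

lemma constant_on_positive_reals:
  fixes \<phi> :: "real \<Rightarrow> real"
  assumes "\<And>u. u > 0 \<Longrightarrow> (\<phi> has_real_derivative 0) (at u)" "r > 0"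
  shows "\<phi> r = \<phi> 1"
proof -
  obtain c where "\<forall>u\<in>{0<..}. \<phi> u = c"
    using has_field_derivative_zero_constant[of "{0<..}" \<phi>]
    by (auto intro: has_field_derivative_at_within assms(1))
  then show ?thesis
    using assms(2) by simp
qed

lemma cdiv_dens1_eq_divergence: "cdiv_dens1 M W x = (\<Sum>j\<in>{1..3}. pd3 (\<lambda>y. W y j) j x)"
proof -
  have "(\<Sum>j\<in>{1..3::nat}. \<Sum>k\<in>{1..3::nat}. christoffel 3 M pd3 x k k j * W x j)
      = (\<Sum>k\<in>{1..3::nat}. \<Sum>j\<in>{1..3::nat}. christoffel 3 M pd3 x k k j * W x j)"
    by (rule sum.swap)
  then show ?thesis
    unfolding cdiv_dens1_def sum.distrib sum_subtractf by simp
qed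

lemma cdiv_dens2_eq:
  "cdiv_dens2 M T x i = (\<Sum>j\<in>{1..3}. pd3 (\<lambda>y. T y i j) j x)
     + (\<Sum>j\<in>{1..3}. \<Sum>k\<in>{1..3}. christoffel 3 M pd3 x i j k * T x k j)"
proof -
  have "(\<Sum>j\<in>{1..3::nat}. \<Sum>k\<in>{1..3::nat}. christoffel 3 M pd3 x k k j * T x i j)
      = (\<Sum>k\<in>{1..3::nat}. \<Sum>j\<in>{1..3::nat}. christoffel 3 M pd3 x k k j * T x i j)"
    by (rule sum.swap)
  then show ?thesis
    unfolding cdiv_dens2_def sum.distrib sum_subtractf by simp
qed

lemma detn_2: "detn 2 A = A 1 1 * A 2 2 - A 1 2 * A 2 1"
proof -
  have "{1..2::nat} = insert 1 (insert 2 {})" by auto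
  then show ?thesis
    unfolding detn_def
    by (simp add: sum_over_permutations_insert sign_compose permutation_swap_id sign_swap_id
        transpose_def)
qed

lemma detn_3:
  "detn 3 A = A 1 1 * A 2 2 * A 3 3 - A 1 1 * A 2 3 * A 3 2 - A 1 2 * A 2 1 * A 3 3
     + A 1 2 * A 2 3 * A 3 1 + A 1 3 * A 2 1 * A 3 2 - A 1 3 * A 2 2 * A 3 1"
proof -
  have "{1..3::nat} = insert 1 (insert 2 (insert 3 {}))" by auto
  then show ?thesis
    unfolding detn_def
    by (simp add: sum_over_permutations_insert sign_compose permutation_swap_id sign_swap_id
        transpose_def permutation_compose algebra_simps)
qed

lemma inv_metric_eqI:
  assumes right: "\<forall>i\<in>{1..n}. \<forall>k\<in>{1..n}. (\<Sum>j\<in>{1..n}. A i j * h j k) = (if i = k then 1 else 0)"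
    and left: "\<forall>i\<in>{1..n}. \<forall>k\<in>{1..n}. (\<Sum>j\<in>{1..n}. h i j * A j k) = (if i = k then 1 else 0)"
    and outside: "\<forall>i k. \<not> (i \<in> {1..n} \<and> k \<in> {1..n}) \<longrightarrow> h i k = 0"
  shows "inv_metric n A = h"
  unfolding inv_metric_def
proof (rule the_equality)
  fix h' assume h': "(\<forall>i\<in>{1..n}. \<forall>k\<in>{1..n}.
      (\<Sum>j\<in>{1..n}. A i j * h' j k) = (if i = k then 1 else (0::real)))
    \<and> (\<forall>i k. \<not> (i \<in> {1..n} \<and> k \<in> {1..n}) \<longrightarrow> h' i k = 0)"
  show "h' = h"
  proof (intro ext)
    fix i k
    show "h' i k = h i k"
    proof (cases "i \<in> {1..n} \<and> k \<in> {1..n}")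
      case True
      \<comment> \<open>a right inverse equals any left inverse: \<open>h' = (h A) h' = h (A h') = h\<close>\<close>
      have "h' i k = (\<Sum>j\<in>{1..n}. if i = j then h' j k else 0)"
        using True by simp
      also have "\<dots> = (\<Sum>j\<in>{1..n}. (\<Sum>l\<in>{1..n}. h i l * A l j) * h' j k)"
        using left True by (intro sum.cong) auto
      also have "\<dots> = (\<Sum>l\<in>{1..n}. h i l * (\<Sum>j\<in>{1..n}. A l j * h' j k))"
        unfolding sum_distrib_left sum_distrib_right by (subst sum.swap) (simp add: mult.assoc)
      also have "\<dots> = (\<Sum>l\<in>{1..n}. if l = k then h i l else 0)"
        using h' True by (intro sum.cong) auto
      also have "\<dots> = h i k"
        using True by simp
      finally show ?thesis .
    qed (use h' outside in auto)
  qed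
qed (use right outside in blast)

lemma inv_metric_2:
  assumes "detn 2 A \<noteq> 0"
  shows "inv_metric 2 A = (\<lambda>i k.
    if i \<in> {1, 2} \<and> k \<in> {1, 2} then (-1) ^ (i + k) * A (3 - k) (3 - i) / detn 2 A else 0)"
  using assms
  by (intro inv_metric_eqI, simp_all only: ball_1_2 sum_1_2)
    (auto simp: field_simps, simp_all add: detn_2 algebra_simps)

lemma inv_metric_2_inverse:
  assumes "detn 2 A \<noteq> 0" "i \<in> {1, 2}" "k \<in> {1, 2}"
  shows "inv_metric 2 A i 1 * A 1 k + inv_metric 2 A i 2 * A 2 k = (if i = k then 1 else 0)"
    and "A i 1 * inv_metric 2 A 1 k + A i 2 * inv_metric 2 A 2 k = (if i = k then 1 else 0)"
  using assms by (auto simp: inv_metric_2 field_simps) (simp_all add: detn_2 algebra_simps)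

lemma inv_metric_2_sym:
  assumes "detn 2 A \<noteq> 0" "A 2 1 = A 1 2"
  shows "inv_metric 2 A 2 1 = inv_metric 2 A 1 2"
  using assms by (simp add: inv_metric_2)

lemma cone_metric_apply:
  "cone_metric g (a, b, r) i j =
     (if i \<in> {1, 2} \<and> j \<in> {1, 2} then r\<^sup>2 * g (a, b) i j else if i = 3 \<and> j = 3 then 1 else 0)"
  by (simp add: cone_metric_def)

lemma detn_cone_metric: "detn 3 (cone_metric g (a, b, r)) = (r\<^sup>2)\<^sup>2 * detn 2 (g (a, b))"
  by (simp add: detn_3 detn_2 cone_metric_apply algebra_simps power2_eq_square)

lemma inv_metric_cone_metric:
  assumes "detn 2 (g (a, b)) \<noteq> 0" "r \<noteq> 0"
  shows "inv_metric 3 (cone_metric g (a, b, r)) = (\<lambda>i k.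
           if i \<in> {1, 2} \<and> k \<in> {1, 2} then inv_metric 2 (g (a, b)) i k / r\<^sup>2
           else if i = 3 \<and> k = 3 then 1 else 0)"
  using inv_metric_2_inverse[OF assms(1), of 1 1] inv_metric_2_inverse[OF assms(1), of 1 2]
    inv_metric_2_inverse[OF assms(1), of 2 1] inv_metric_2_inverse[OF assms(1), of 2 2] assms(2)
  by (intro inv_metric_eqI, simp_all only: ball_1_3 sum_1_3) (auto simp: cone_metric_apply)

lemma pd3_cone_metric_tangential:
  assumes "l \<in> {1, 2}" "k \<in> {1, 2}" "j \<in> {1, 2}" "(\<lambda>y. g y l k) differentiable (at (a, b))"
  shows "pd3 (\<lambda>y. cone_metric g y l k) j (a, b, r) = r\<^sup>2 * pd2 (\<lambda>y. g y l k) j (a, b)"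
proof -
  have "(\<lambda>y. cone_metric g y l k) = (\<lambda>y. (snd (snd y))\<^sup>2 * g (fst y, fst (snd y)) l k)"
    using assms(1,2) by (auto simp: cone_metric_def)
  then show ?thesis
    using pd3_separable_tangential[where c = "\<lambda>s. s\<^sup>2" and F = "\<lambda>z. g z l k" and x = "(a, b, r)"] assms(3,4)
    by simp
qed

lemma pd3_cone_metric_radial:
  assumes "l \<in> {1, 2}" "k \<in> {1, 2}"
  shows "pd3 (\<lambda>y. cone_metric g y l k) 3 (a, b, r) = 2 * r * g (a, b) l k"
proof -
  have "(\<lambda>y. cone_metric g y l k) = (\<lambda>y. (snd (snd y))\<^sup>2 * g (fst y, fst (snd y)) l k)"
    using assms by (auto simp: cone_metric_def)
  moreover have "((\<lambda>s. s\<^sup>2) has_real_derivative 2 * r) (at r)"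
    by (auto intro!: derivative_eq_intros)
  ultimately show ?thesis
    using pd3_separable_radial[where c = "\<lambda>s. s\<^sup>2" and F = "\<lambda>z. g z l k" and x = "(a, b, r)"]
    by simp
qed

lemma pd3_cone_metric_const:
  assumes "\<not> (l \<in> {1, 2} \<and> k \<in> {1, 2})"
  shows "pd3 (\<lambda>y. cone_metric g y l k) j x = 0"
proof -
  have "(\<lambda>y. cone_metric g y l k) = (\<lambda>y. if l = 3 \<and> k = 3 then 1 else 0)"
    using assms by (auto simp: cone_metric_def)
  then show ?thesis
    by (simp add: pd3_const)
qed

context
  fixes g :: "pt2 \<Rightarrow> nat \<Rightarrow> nat \<Rightarrow> real" and a b r :: real
  assumes det_nonzero: "detn 2 (g (a, b)) \<noteq> 0" and r_nonzero: "r \<noteq> 0"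
begin

lemma christoffel_cone_metric_tangential:
  assumes "\<forall>l\<in>{1, 2}. \<forall>k\<in>{1, 2}. (\<lambda>y. g y l k) differentiable (at (a, b))"
    and "i \<in> {1, 2}" "j \<in> {1, 2}" "k \<in> {1, 2}"
  shows "Gam3 (cone_metric g) (a, b, r) i j k = Gam2 g (a, b) i j k"
  unfolding christoffel_def sum_1_3 sum_1_2 inv_metric_cone_metric[of g a b r, OF det_nonzero r_nonzero]
  using assms r_nonzero by (auto simp: pd3_cone_metric_tangential pd3_cone_metric_const field_simps)

lemma christoffel_cone_metric_mixed:
  assumes "i \<in> {1, 2}" "j \<in> {1, 2}"
  shows "Gam3 (cone_metric g) (a, b, r) i j 3 = (if i = j then 1 / r else 0)"
    and "Gam3 (cone_metric g) (a, b, r) i 3 j = (if i = j then 1 / r else 0)"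
proof -
  have "Gam3 (cone_metric g) (a, b, r) i j 3
      = (inv_metric 2 (g (a, b)) i 1 * g (a, b) 1 j + inv_metric 2 (g (a, b)) i 2 * g (a, b) 2 j) / r"
   and "Gam3 (cone_metric g) (a, b, r) i 3 j
      = (inv_metric 2 (g (a, b)) i 1 * g (a, b) 1 j + inv_metric 2 (g (a, b)) i 2 * g (a, b) 2 j) / r"
    unfolding christoffel_def sum_1_3 inv_metric_cone_metric[of g a b r, OF det_nonzero r_nonzero]
    using assms r_nonzero
    by (simp_all add: pd3_cone_metric_radial pd3_cone_metric_const field_simps power2_eq_square)
  then show "Gam3 (cone_metric g) (a, b, r) i j 3 = (if i = j then 1 / r else 0)"
    and "Gam3 (cone_metric g) (a, b, r) i 3 j = (if i = j then 1 / r else 0)"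
    using inv_metric_2_inverse(1)[OF det_nonzero assms] by simp_all
qed

lemma christoffel_cone_metric_radial:
  assumes "j \<in> {1, 2}" "k \<in> {1, 2}"
  shows "Gam3 (cone_metric g) (a, b, r) 3 j k = - r * g (a, b) j k"
  unfolding christoffel_def sum_1_3 inv_metric_cone_metric[of g a b r, OF det_nonzero r_nonzero]
  using assms by (simp add: pd3_cone_metric_radial pd3_cone_metric_const)

lemma christoffel_cone_metric_vanishing:
  shows "i \<in> {1, 2} \<Longrightarrow> Gam3 (cone_metric g) (a, b, r) i 3 3 = 0"
    and "Gam3 (cone_metric g) (a, b, r) 3 3 k = 0"
    and "Gam3 (cone_metric g) (a, b, r) 3 k 3 = 0"
  unfolding christoffel_def sum_1_3 inv_metric_cone_metric[of g a b r, OF det_nonzero r_nonzero]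
  by (simp_all add: pd3_cone_metric_const)

end

locale conical_flow =
  fixes U :: "pt2 set"
    and g :: "pt2 \<Rightarrow> nat \<Rightarrow> nat \<Rightarrow> real"
    and rho e :: "pt3 \<Rightarrow> real"
    and V :: "pt3 \<Rightarrow> nat \<Rightarrow> real"
    and Pfun :: "real \<Rightarrow> real \<Rightarrow> real"
    and G :: "pt3 \<Rightarrow> nat \<Rightarrow> nat \<Rightarrow> real"
    and D :: "pt3 set"
    and sG :: "pt3 \<Rightarrow> real"
    and Gi :: "pt3 \<Rightarrow> nat \<Rightarrow> nat \<Rightarrow> real"
    and P E :: "pt3 \<Rightarrow> real"
    and rho2 e2 :: "pt2 \<Rightarrow> real"
    and v :: "pt2 \<Rightarrow> nat \<Rightarrow> real"
    and V3 sg :: "pt2 \<Rightarrow> real"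
    and gi :: "pt2 \<Rightarrow> nat \<Rightarrow> nat \<Rightarrow> real"
    and qc2 P2 E2 :: "pt2 \<Rightarrow> real"
  assumes G_def: "G = cone_metric g"
    and D_def: "D = {(a, b, r). (a, b) \<in> U \<and> r > 0}"
    and sG_def: "sG = (\<lambda>x. sqrt (detn 3 (G x)))"
    and Gi_def: "Gi = (\<lambda>x. inv_metric 3 (G x))"
    and P_def: "P = (\<lambda>x. Pfun (rho x) (e x))"
    and E_def: "E = (\<lambda>x. e x + (1/2) * (\<Sum>i\<in>{1..3}. \<Sum>j\<in>{1..3}. G x i j * V x i * V x j))"
    and rho2_def: "rho2 = (\<lambda>xi. rho (fst xi, snd xi, 1))"
    and e2_def: "e2 = (\<lambda>xi. e (fst xi, snd xi, 1))"
    and v_def: "v = (\<lambda>xi b. 1 * V (fst xi, snd xi, 1) b)"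
    and V3_def: "V3 = (\<lambda>xi. V (fst xi, snd xi, 1) 3)"
    and sg_def: "sg = (\<lambda>xi. sqrt (detn 2 (g xi)))"
    and gi_def: "gi = (\<lambda>xi. inv_metric 2 (g xi))"
    and qc2_def: "qc2 = (\<lambda>xi. (\<Sum>a\<in>{1..2}. \<Sum>b\<in>{1..2}. g xi a b * v xi a * v xi b))"
    and P2_def: "P2 = (\<lambda>xi. Pfun (rho2 xi) (e2 xi))"
    and E2_def: "E2 = (\<lambda>xi. e2 xi + (1/2) * (qc2 xi + (V3 xi)\<^sup>2))"
    and U_open: "open U"
    and g_sym: "\<forall>xi\<in>U. g xi 2 1 = g xi 1 2"
    and g_pos: "\<forall>xi\<in>U. detn 2 (g xi) > 0"
    and g_diff: "\<forall>a\<in>{1..2}. \<forall>b\<in>{1..2}. \<forall>xi\<in>U. (\<lambda>y. g y a b) differentiable (at xi)"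
    and rho_diff: "\<forall>x\<in>D. rho differentiable (at x)"
    and e_diff: "\<forall>x\<in>D. e differentiable (at x)"
    and V_diff: "\<forall>i\<in>{1..3}. \<forall>x\<in>D. (\<lambda>y. V y i) differentiable (at x)"
    and P_diff: "\<forall>z. (\<lambda>z. Pfun (fst z) (snd z)) differentiable (at z)"
    and rho_pos: "\<forall>x\<in>D. rho x > 0"
    and conical_rho: "\<forall>x\<in>D. pd3 rho 3 x = 0"
    and conical_e: "\<forall>x\<in>D. pd3 e 3 x = 0"
    and conical_V: "\<forall>x\<in>D. \<forall>i\<in>{1..3}.
                      pd3 (\<lambda>y. V y i) 3 x + (\<Sum>k\<in>{1..3}. Gam3 G x i 3 k * V x k) = 0"
begin

lemma mem_D: "(a, b, r) \<in> D \<longleftrightarrow> (a, b) \<in> U \<and> r > 0"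
  by (simp add: D_def)

lemma open_D: "open D"
proof -
  have "D = (\<lambda>y. (fst y, fst (snd y))) -` U \<inter> (\<lambda>y. snd (snd y)) -` {0<..}"
    by (auto simp: D_def)
  moreover have "open ((\<lambda>y::pt3. (fst y, fst (snd y))) -` U)"
    by (rule open_vimage[OF U_open]) (auto intro!: continuous_intros)
  moreover have "open ((\<lambda>y::pt3. snd (snd y)) -` {0<..})"
    by (rule open_vimage) (auto intro!: continuous_intros)
  ultimately show ?thesis
    by auto
qed

lemma g_det_nonzero: "\<xi> \<in> U \<Longrightarrow> detn 2 (g \<xi>) \<noteq> 0"
  using g_pos by (metis less_irrefl)

lemma sg_pos: "\<xi> \<in> U \<Longrightarrow> sg \<xi> > 0"
  using g_pos by (simp add: sg_def)

lemma gi_sym: "\<xi> \<in> U \<Longrightarrow> gi \<xi> 2 1 = gi \<xi> 1 2"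
  unfolding gi_def using inv_metric_2_sym g_det_nonzero g_sym by blast

lemma g_gi_inverse:
  assumes "\<xi> \<in> U" "i \<in> {1, 2}" "k \<in> {1, 2}"
  shows "g \<xi> i 1 * gi \<xi> 1 k + g \<xi> i 2 * gi \<xi> 2 k = (if i = k then 1 else 0)"
  unfolding gi_def using inv_metric_2_inverse(2)[OF g_det_nonzero[OF assms(1)] assms(2,3)] .

lemma sG_eq: "sG (a, b, r) = r\<^sup>2 * sg (a, b)"
proof -
  have "sqrt ((r\<^sup>2)\<^sup>2) = r\<^sup>2"
    by (simp only: real_sqrt_abs) simp
  then show ?thesis
    by (simp only: sG_def sg_def G_def detn_cone_metric real_sqrt_mult)
qed

lemma Gi_eq:
  assumes "(a, b) \<in> U" "r > 0"
  shows "Gi (a, b, r) = (\<lambda>i k. if i \<in> {1, 2} \<and> k \<in> {1, 2} then gi (a, b) i k / r\<^sup>2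
                               else if i = 3 \<and> k = 3 then 1 else 0)"
  unfolding Gi_def G_def gi_def
  using inv_metric_cone_metric[of g a b r] g_det_nonzero[OF assms(1)] assms(2) by simp

lemma christoffel_G:
  assumes "(a, b) \<in> U" "r > 0"
  shows "\<And>i j k. i \<in> {1, 2} \<Longrightarrow> j \<in> {1, 2} \<Longrightarrow> k \<in> {1, 2} \<Longrightarrow>
           Gam3 G (a, b, r) i j k = Gam2 g (a, b) i j k"
    and "\<And>i j. i \<in> {1, 2} \<Longrightarrow> j \<in> {1, 2} \<Longrightarrow> Gam3 G (a, b, r) i j 3 = (if i = j then 1 / r else 0)"
    and "\<And>i j. i \<in> {1, 2} \<Longrightarrow> j \<in> {1, 2} \<Longrightarrow> Gam3 G (a, b, r) i 3 j = (if i = j then 1 / r else 0)"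
    and "\<And>j k. j \<in> {1, 2} \<Longrightarrow> k \<in> {1, 2} \<Longrightarrow> Gam3 G (a, b, r) 3 j k = - r * g (a, b) j k"
    and "\<And>i. i \<in> {1, 2} \<Longrightarrow> Gam3 G (a, b, r) i 3 3 = 0"
    and "\<And>k. Gam3 G (a, b, r) 3 3 k = 0"
    and "\<And>k. Gam3 G (a, b, r) 3 k 3 = 0"
proof -
  have det: "detn 2 (g (a, b)) \<noteq> 0" and r: "r \<noteq> 0"
    using g_det_nonzero[OF assms(1)] assms(2) by simp_all
  have diff: "\<forall>l\<in>{1, 2}. \<forall>k\<in>{1, 2}. (\<lambda>y. g y l k) differentiable (at (a, b))"
    using g_diff assms(1) by auto
  show "\<And>i j k. i \<in> {1, 2} \<Longrightarrow> j \<in> {1, 2} \<Longrightarrow> k \<in> {1, 2} \<Longrightarrow>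
           Gam3 G (a, b, r) i j k = Gam2 g (a, b) i j k"
    unfolding G_def using christoffel_cone_metric_tangential[of g a b r, OF det r diff] .
  show "\<And>i j. i \<in> {1, 2} \<Longrightarrow> j \<in> {1, 2} \<Longrightarrow> Gam3 G (a, b, r) i j 3 = (if i = j then 1 / r else 0)"
    and "\<And>i j. i \<in> {1, 2} \<Longrightarrow> j \<in> {1, 2} \<Longrightarrow> Gam3 G (a, b, r) i 3 j = (if i = j then 1 / r else 0)"
    unfolding G_def using christoffel_cone_metric_mixed[of g a b r, OF det r] by simp_all
  show "\<And>j k. j \<in> {1, 2} \<Longrightarrow> k \<in> {1, 2} \<Longrightarrow> Gam3 G (a, b, r) 3 j k = - r * g (a, b) j k"
    unfolding G_def using christoffel_cone_metric_radial[of g a b r, OF det r] .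
  show "\<And>i. i \<in> {1, 2} \<Longrightarrow> Gam3 G (a, b, r) i 3 3 = 0"
    and "\<And>k. Gam3 G (a, b, r) 3 3 k = 0"
    and "\<And>k. Gam3 G (a, b, r) 3 k 3 = 0"
    unfolding G_def using christoffel_cone_metric_vanishing[of g a b r, OF det r] by simp_all
qed

lemma radially_constant:
  assumes "\<forall>x\<in>D. f differentiable (at x)" "\<forall>x\<in>D. pd3 f 3 x = 0" "(a, b) \<in> U" "r > 0"
  shows "f (a, b, r) = f (a, b, 1)"
proof (rule constant_on_positive_reals[OF _ assms(4)])
  fix u :: real
  assume "u > 0"
  then have "(a, b, u) \<in> D"
    using assms(3) by (simp add: mem_D)
  then show "((\<lambda>u. f (a, b, u)) has_real_derivative 0) (at u)"
    using pd3_radial_has_real_derivative[of f a b u] assms(1,2) by auto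
qed

lemma rho_eq:
  assumes "(a, b) \<in> U" "r > 0"
  shows "rho (a, b, r) = rho2 (a, b)"
  unfolding rho2_def using radially_constant[OF rho_diff conical_rho assms] by simp

lemma e_eq:
  assumes "(a, b) \<in> U" "r > 0"
  shows "e (a, b, r) = e2 (a, b)"
  unfolding e2_def using radially_constant[OF e_diff conical_e assms] by simp

lemma V3_eq:
  assumes "(a, b) \<in> U" "r > 0"
  shows "V (a, b, r) 3 = V3 (a, b)"
proof -
  have "pd3 (\<lambda>y. V y 3) 3 x = 0" if "x \<in> D" for x
  proof -
    obtain a' b' r' where x: "x = (a', b', r')"
      by (cases x)
    then have "(a', b') \<in> U" "r' > 0"
      using that by (simp_all add: mem_D)
    then show ?thesis
      using conical_V[rule_format, OF that, of 3] christoffel_G(6) unfolding x sum_1_3 by simp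
  qed
  then show ?thesis
    unfolding V3_def using radially_constant[of "\<lambda>y. V y 3", OF _ _ assms] V_diff by simp
qed

text \<open>Since \<open>\<Gamma>\<^sub>3\<^sup>\<alpha>\<^sub>\<beta> = \<delta>\<^sup>\<alpha>\<^sub>\<beta>/r\<close>, the conical assumption for \<open>V\<^sup>\<alpha>\<close> reads
  \<open>\<partial>\<^sub>r V\<^sup>\<alpha> + V\<^sup>\<alpha>/r = 0\<close>, i.e. \<open>r V\<^sup>\<alpha>\<close> is radially constant.\<close>

lemma V_tangential_eq:
  assumes "(a, b) \<in> U" "r > 0" "i \<in> {1, 2}"
  shows "V (a, b, r) i = v (a, b) i / r"
proof -
  have "r * V (a, b, r) i = 1 * V (a, b, 1) i"
  proof (rule constant_on_positive_reals[where \<phi> = "\<lambda>u. u * V (a, b, u) i", OF _ assms(2)])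
    fix u :: real
    assume "u > 0"
    then have x: "(a, b, u) \<in> D"
      using assms(1) by (simp add: mem_D)
    have i: "i \<in> {1..3}"
      using assms(3) by auto
    have "(\<Sum>k\<in>{1..3}. Gam3 G (a, b, u) i 3 k * V (a, b, u) k) = V (a, b, u) i / u"
      unfolding sum_1_3 using assms(1,3) \<open>u > 0\<close> by (auto simp: christoffel_G(3,5))
    then have "pd3 (\<lambda>y. V y i) 3 (a, b, u) = - (V (a, b, u) i / u)"
      using conical_V[rule_format, OF x i] by linarith
    moreover have "((\<lambda>u. V (a, b, u) i) has_real_derivative pd3 (\<lambda>y. V y i) 3 (a, b, u)) (at u)"
      using pd3_radial_has_real_derivative[OF V_diff[rule_format, OF i x]] .
    ultimately show "((\<lambda>u. u * V (a, b, u) i) has_real_derivative 0) (at u)"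
      using DERIV_mult[OF DERIV_ident] \<open>u > 0\<close> by fastforce
  qed
  then show ?thesis
    using assms(2) by (simp add: v_def field_simps)
qed

lemma P_eq: "(a, b) \<in> U \<Longrightarrow> r > 0 \<Longrightarrow> P (a, b, r) = P2 (a, b)"
  by (simp add: P_def P2_def rho_eq e_eq)

lemma E_eq:
  assumes "(a, b) \<in> U" "r > 0"
  shows "E (a, b, r) = E2 (a, b)"
proof -
  have "(\<Sum>i\<in>{1..3}. \<Sum>j\<in>{1..3}. G (a, b, r) i j * V (a, b, r) i * V (a, b, r) j)
      = qc2 (a, b) + (V3 (a, b))\<^sup>2"
    unfolding G_def qc2_def sum_1_3 sum_1_2 cone_metric_apply
    using assms by (simp add: V_tangential_eq V3_eq power2_eq_square)
  then show ?thesis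
    using assms by (simp add: E_def E2_def e_eq)
qed

lemma differentiable_at_unit_radius:
  fixes f :: "pt3 \<Rightarrow> real"
  assumes "\<forall>x\<in>D. f differentiable (at x)" "\<xi> \<in> U"
  shows "(\<lambda>y. f (fst y, snd y, 1)) differentiable (at \<xi>)"
proof -
  have "(\<lambda>y::pt2. (fst y, snd y, 1::real)) differentiable (at \<xi>)"
    using bounded_linear_imp_differentiable[OF bounded_linear_fst]
      bounded_linear_imp_differentiable[OF bounded_linear_snd]
    by (intro differentiable_Pair differentiable_const) (auto simp: fun_eq_iff)
  moreover have "f differentiable (at ((\<lambda>y::pt2. (fst y, snd y, 1::real)) \<xi>))"
    using assms by (simp add: D_def)
  ultimately show ?thesis
    using differentiable_chain_at by (force simp: o_def)
qed

lemma rho2_diff: "\<xi> \<in> U \<Longrightarrow> rho2 differentiable (at \<xi>)"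
  unfolding rho2_def by (rule differentiable_at_unit_radius[OF rho_diff])

lemma e2_diff: "\<xi> \<in> U \<Longrightarrow> e2 differentiable (at \<xi>)"
  unfolding e2_def by (rule differentiable_at_unit_radius[OF e_diff])

lemma v_diff: "\<xi> \<in> U \<Longrightarrow> i \<in> {1..3} \<Longrightarrow> (\<lambda>y. v y i) differentiable (at \<xi>)"
  unfolding v_def using differentiable_at_unit_radius[of "\<lambda>y. V y i"] V_diff by simp

lemma V3_diff: "\<xi> \<in> U \<Longrightarrow> V3 differentiable (at \<xi>)"
  unfolding V3_def using differentiable_at_unit_radius[of "\<lambda>y. V y 3"] V_diff by simp

lemma g_entry_diff: "\<xi> \<in> U \<Longrightarrow> i \<in> {1, 2} \<Longrightarrow> k \<in> {1, 2} \<Longrightarrow> (\<lambda>y. g y i k) differentiable (at \<xi>)"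
  using g_diff by auto

lemma detn_g_diff: "\<xi> \<in> U \<Longrightarrow> (\<lambda>y. detn 2 (g y)) differentiable (at \<xi>)"
  unfolding detn_2 by (intro derivative_intros g_entry_diff) auto

lemma sg_diff:
  assumes "\<xi> \<in> U"
  shows "sg differentiable (at \<xi>)"
proof -
  have "sqrt differentiable (at (detn 2 (g \<xi>)))"
    using DERIV_real_sqrt g_pos assms real_differentiable_def by blast
  then show ?thesis
    unfolding sg_def using differentiable_chain_at[OF detn_g_diff[OF assms]] by (force simp: o_def)
qed

lemma gi_diff:
  assumes "\<xi> \<in> U" "i \<in> {1, 2}" "k \<in> {1, 2}"
  shows "(\<lambda>y. gi y i k) differentiable (at \<xi>)"
proof (rule differentiable_transform_open[OF _ U_open assms(1)])
  have "(\<lambda>y. g y (3 - k) (3 - i)) differentiable (at \<xi>)"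
    using assms by (intro g_entry_diff) auto
  then show "(\<lambda>y. (-1) ^ (i + k) * g y (3 - k) (3 - i) / detn 2 (g y)) differentiable (at \<xi>)"
    by (rule differentiable_divide[OF differentiable_mult[OF differentiable_const]
          detn_g_diff[OF assms(1)] g_det_nonzero[OF assms(1)]])
  show "(-1) ^ (i + k) * g y (3 - k) (3 - i) / detn 2 (g y) = gi y i k" if "y \<in> U" for y
    unfolding gi_def inv_metric_2[OF g_det_nonzero[OF that]] using assms(2,3) by simp
qed

lemma P2_diff:
  assumes "\<xi> \<in> U"
  shows "P2 differentiable (at \<xi>)"
proof -
  have "(\<lambda>y. (rho2 y, e2 y)) differentiable (at \<xi>)"
    using rho2_diff[OF assms] e2_diff[OF assms] by (rule differentiable_Pair)
  from differentiable_chain_at[OF this P_diff[rule_format]] show ?thesis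
    by (simp add: P2_def o_def)
qed

lemma qc2_diff: "\<xi> \<in> U \<Longrightarrow> qc2 differentiable (at \<xi>)"
  unfolding qc2_def sum_1_2 by (intro derivative_intros g_entry_diff v_diff) auto

lemma E2_diff: "\<xi> \<in> U \<Longrightarrow> E2 differentiable (at \<xi>)"
  unfolding E2_def by (intro derivative_intros e2_diff qc2_diff V3_diff)

lemma pd3_tangential_separable_on_D:
  fixes f :: "pt3 \<Rightarrow> real" and F :: "pt2 \<Rightarrow> real"
  assumes "(a, b) \<in> U" "r > 0" "j \<in> {1, 2}"
    and "\<And>a' b' r'. (a', b') \<in> U \<Longrightarrow> r' > 0 \<Longrightarrow> f (a', b', r') = c r' * F (a', b')"
    and "F differentiable (at (a, b))"
  shows "pd3 f j (a, b, r) = c r * pd2 F j (a, b)"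
proof -
  have "pd3 f j (a, b, r) = pd3 (\<lambda>y. c (snd (snd y)) * F (fst y, fst (snd y))) j (a, b, r)"
    using assms(1,2,4) by (intro pd3_cong_on_open[OF open_D]) (auto simp: D_def)
  also have "\<dots> = c r * pd2 F j (a, b)"
    using pd3_separable_tangential[of j F "(a, b, r)" c] assms(3,5) by simp
  finally show ?thesis .
qed

lemma pd3_radial_separable_on_D:
  fixes f :: "pt3 \<Rightarrow> real" and F :: "pt2 \<Rightarrow> real"
  assumes "(a, b) \<in> U" "r > 0"
    and "\<And>a' b' r'. (a', b') \<in> U \<Longrightarrow> r' > 0 \<Longrightarrow> f (a', b', r') = c r' * F (a', b')"
    and "(c has_real_derivative c') (at r)"
  shows "pd3 f 3 (a, b, r) = c' * F (a, b)"
proof -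
  have "pd3 f 3 (a, b, r) = pd3 (\<lambda>y. c (snd (snd y)) * F (fst y, fst (snd y))) 3 (a, b, r)"
    using assms(1,2,3) by (intro pd3_cong_on_open[OF open_D]) (auto simp: D_def)
  also have "\<dots> = c' * F (a, b)"
    using pd3_separable_radial[of c c' "(a, b, r)" F] assms(4) by simp
  finally show ?thesis .
qed

text \<open>A flux \<open>\<surd>G \<Phi> V\<^sup>j\<close> of a radially constant density \<open>\<Phi>\<close> scales like \<open>r\<close> in the
  tangential and like \<open>r\<^sup>2\<close> in the radial direction; the latter produces the source term.\<close>

lemma divergence_conical_flux:
  assumes "(a, b) \<in> U" "r > 0"
    and \<Phi>: "\<And>a' b' r'. (a', b') \<in> U \<Longrightarrow> r' > 0 \<Longrightarrow> \<Phi> (a', b', r') = \<phi> (a', b')"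
    and "\<phi> differentiable (at (a, b))"
  shows "cdiv_dens1 G (\<lambda>y j. sG y * \<Phi> y * V y j) (a, b, r)
    = r * ((\<Sum>c\<in>{1..2}. pd2 (\<lambda>y. sg y * \<phi> y * v y c) c (a, b))
            + 2 * sg (a, b) * \<phi> (a, b) * V3 (a, b))"
proof -
  have tangential: "pd3 (\<lambda>y. sG y * \<Phi> y * V y j) j (a, b, r)
      = r * pd2 (\<lambda>y. sg y * \<phi> y * v y j) j (a, b)" if "j \<in> {1, 2}" for j
  proof (rule pd3_tangential_separable_on_D[where c = "\<lambda>s. s", OF assms(1,2) that])
    show "sG (a', b', r') * \<Phi> (a', b', r') * V (a', b', r') j
        = r' * (sg (a', b') * \<phi> (a', b') * v (a', b') j)" if "(a', b') \<in> U" "r' > 0" for a' b' r'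
      using that \<open>j \<in> {1, 2}\<close> by (simp add: \<Phi> sG_eq V_tangential_eq power2_eq_square)
    show "(\<lambda>y. sg y * \<phi> y * v y j) differentiable (at (a, b))"
      using assms(1,4) that by (intro differentiable_mult sg_diff v_diff) auto
  qed
  have radial: "pd3 (\<lambda>y. sG y * \<Phi> y * V y 3) 3 (a, b, r)
      = 2 * r * (sg (a, b) * \<phi> (a, b) * V3 (a, b))"
  proof (rule pd3_radial_separable_on_D[where c = "\<lambda>s. s\<^sup>2", OF assms(1,2)])
    show "sG (a', b', r') * \<Phi> (a', b', r') * V (a', b', r') 3
        = r'\<^sup>2 * (sg (a', b') * \<phi> (a', b') * V3 (a', b'))" if "(a', b') \<in> U" "r' > 0" for a' b' r'
      using that by (simp add: \<Phi> sG_eq V3_eq)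
    show "((\<lambda>s. s\<^sup>2) has_real_derivative 2 * r) (at r)"
      by (auto intro!: derivative_eq_intros)
  qed
  have j: "(1::nat) \<in> {1, 2}" "(2::nat) \<in> {1, 2}"
    by simp_all
  show ?thesis
    unfolding cdiv_dens1_eq_divergence sum_1_3 sum_1_2 tangential[OF j(1)] tangential[OF j(2)] radial
    by (simp add: algebra_simps)
qed

lemma continuity_reduction:
  assumes "(a, b) \<in> U" "r > 0"
  shows "cdiv_dens1 G (\<lambda>y j. rho y * sG y * V y j) (a, b, r)
    = r * ((\<Sum>c\<in>{1..2}. pd2 (\<lambda>y. rho2 y * sg y * v y c) c (a, b))
            + 2 * rho2 (a, b) * sg (a, b) * V3 (a, b))"
proof -
  have flux3: "(\<lambda>y j. rho y * sG y * V y j) = (\<lambda>y j. sG y * rho y * V y j)"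
    and flux2: "\<And>c. (\<lambda>y. rho2 y * sg y * v y c) = (\<lambda>y. sg y * rho2 y * v y c)"
    by (simp_all add: ac_simps)
  have "cdiv_dens1 G (\<lambda>y j. sG y * rho y * V y j) (a, b, r)
    = r * ((\<Sum>c\<in>{1..2}. pd2 (\<lambda>y. sg y * rho2 y * v y c) c (a, b))
            + 2 * sg (a, b) * rho2 (a, b) * V3 (a, b))"
    using assms rho_eq rho2_diff[OF assms(1)] by (rule divergence_conical_flux)
  then show ?thesis
    unfolding flux3 flux2 by (simp add: ac_simps)
qed

lemma energy_reduction:
  assumes "(a, b) \<in> U" "r > 0"
  shows "cdiv_dens1 G (\<lambda>y j. sG y * (rho y * E y + P y) * V y j) (a, b, r)
    = r * ((\<Sum>c\<in>{1..2}. pd2 (\<lambda>y. sg y * (rho2 y * E2 y + P2 y) * v y c) c (a, b))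
            + 2 * sg (a, b) * (rho2 (a, b) * E2 (a, b) + P2 (a, b)) * V3 (a, b))"
proof -
  have "(\<lambda>\<xi>. rho2 \<xi> * E2 \<xi> + P2 \<xi>) differentiable (at (a, b))"
    using assms(1) by (intro differentiable_add differentiable_mult rho2_diff E2_diff P2_diff)
  then show ?thesis
    using assms by (intro divergence_conical_flux) (simp_all add: rho_eq E_eq P_eq)
qed

lemma stress_tangential_eq:
  assumes "(a, b) \<in> U" "r > 0" "i \<in> {1, 2}" "j \<in> {1, 2}"
  shows "sG (a, b, r) * (rho (a, b, r) * V (a, b, r) i * V (a, b, r) j + Gi (a, b, r) i j * P (a, b, r))
    = sg (a, b) * (rho2 (a, b) * v (a, b) i * v (a, b) j + gi (a, b) i j * P2 (a, b))"
  using assms by (simp add: rho_eq sG_eq V_tangential_eq P_eq Gi_eq field_simps power2_eq_square)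

lemma momentum_tangential_reduction:
  assumes "(a, b) \<in> U" "r > 0" "i \<in> {1, 2}"
  shows "cdiv_dens2 G (\<lambda>y i j. sG y * (rho y * V y i * V y j + Gi y i j * P y)) (a, b, r) i =
      (\<Sum>c\<in>{1..2}. pd2 (\<lambda>y. sg y * (rho2 y * v y i * v y c + gi y i c * P2 y)) c (a, b))
    + (\<Sum>c\<in>{1..2}. \<Sum>n\<in>{1..2}. Gam2 g (a, b) i c n * sg (a, b)
          * (rho2 (a, b) * v (a, b) c * v (a, b) n + gi (a, b) c n * P2 (a, b)))
    + 3 * rho2 (a, b) * sg (a, b) * v (a, b) i * V3 (a, b)"
proof -
  have tangential: "pd3 (\<lambda>y. sG y * (rho y * V y i * V y j + Gi y i j * P y)) j (a, b, r)
      = pd2 (\<lambda>y. sg y * (rho2 y * v y i * v y j + gi y i j * P2 y)) j (a, b)" if "j \<in> {1, 2}" for j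
  proof -
    have "(\<lambda>y. sg y * (rho2 y * v y i * v y j + gi y i j * P2 y)) differentiable (at (a, b))"
      using assms(1,3) that
      by (intro differentiable_mult differentiable_add sg_diff rho2_diff v_diff gi_diff P2_diff) auto
    then have "pd3 (\<lambda>y. sG y * (rho y * V y i * V y j + Gi y i j * P y)) j (a, b, r)
      = 1 * pd2 (\<lambda>y. sg y * (rho2 y * v y i * v y j + gi y i j * P2 y)) j (a, b)"
      using stress_tangential_eq assms(3) that
      by (intro pd3_tangential_separable_on_D[where c = "\<lambda>_. 1", OF assms(1,2) that]) auto
    then show ?thesis
      by simp
  qed
  have radial: "pd3 (\<lambda>y. sG y * (rho y * V y i * V y 3 + Gi y i 3 * P y)) 3 (a, b, r)
      = sg (a, b) * rho2 (a, b) * v (a, b) i * V3 (a, b)"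
  proof -
    have "pd3 (\<lambda>y. sG y * (rho y * V y i * V y 3 + Gi y i 3 * P y)) 3 (a, b, r)
      = 1 * (sg (a, b) * rho2 (a, b) * v (a, b) i * V3 (a, b))"
    proof (rule pd3_radial_separable_on_D[where c = "\<lambda>s. s", OF assms(1,2)])
      show "sG (a', b', r') * (rho (a', b', r') * V (a', b', r') i * V (a', b', r') 3 + Gi (a', b', r') i 3 * P (a', b', r'))
        = r' * (sg (a', b') * rho2 (a', b') * v (a', b') i * V3 (a', b'))" if "(a', b') \<in> U" "r' > 0" for a' b' r'
        using that assms(3)
        by (auto simp: rho_eq sG_eq V_tangential_eq V3_eq Gi_eq field_simps power2_eq_square)
    qed (rule DERIV_ident)
    then show ?thesis
      by simp
  qed
  have j: "(1::nat) \<in> {1, 2}" "(2::nat) \<in> {1, 2}"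
    by simp_all
  show ?thesis
    unfolding cdiv_dens2_eq sum_1_3 sum_1_2 tangential[OF j(1)] tangential[OF j(2)] radial
    using assms gi_sym[OF assms(1)]
    by (auto simp: christoffel_G[OF assms(1,2)] rho_eq sG_eq V_tangential_eq V3_eq P_eq Gi_eq
        field_simps power2_eq_square)
qed

text \<open>The crossflow relation comes from the Christoffel symbols
  \<open>\<Gamma>\<^sub>\<alpha>\<^sup>3\<^sub>\<beta> = -r g\<^sub>\<alpha>\<^sub>\<beta>\<close>, which contract the tangential stress to
  \<open>\<surd>g (\<rho> q\<^sub>c\<^sup>2 + 2P)\<close>.\<close>

lemma momentum_radial_reduction:
  assumes "(a, b) \<in> U" "r > 0"
  shows "cdiv_dens2 G (\<lambda>y i j. sG y * (rho y * V y i * V y j + Gi y i j * P y)) (a, b, r) 3 =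
      r * V3 (a, b) * ((\<Sum>c\<in>{1..2}. pd2 (\<lambda>y. rho2 y * sg y * v y c) c (a, b))
                       + 2 * rho2 (a, b) * sg (a, b) * V3 (a, b))
    + r * rho2 (a, b) * sg (a, b) * ((\<Sum>c\<in>{1..2}. v (a, b) c * pd2 V3 c (a, b)) - qc2 (a, b))"
proof -
  let ?\<xi> = "(a, b)"
  have j: "(1::nat) \<in> {1, 2}" "(2::nat) \<in> {1, 2}"
    by simp_all
  let ?S = "\<lambda>i j. sg ?\<xi> * (rho2 ?\<xi> * v ?\<xi> i * v ?\<xi> j + gi ?\<xi> i j * P2 ?\<xi>)"
  have mass_flux_diff: "(\<lambda>y. rho2 y * sg y * v y j) differentiable (at ?\<xi>)" if "j \<in> {1, 2}" for j
    using assms(1) that by (intro differentiable_mult rho2_diff sg_diff v_diff) auto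
  have tangential: "pd3 (\<lambda>y. sG y * (rho y * V y 3 * V y j + Gi y 3 j * P y)) j (a, b, r)
      = r * (rho2 ?\<xi> * sg ?\<xi> * v ?\<xi> j * pd2 V3 j ?\<xi> + V3 ?\<xi> * pd2 (\<lambda>y. rho2 y * sg y * v y j) j ?\<xi>)"
    if "j \<in> {1, 2}" for j
  proof -
    have "pd3 (\<lambda>y. sG y * (rho y * V y 3 * V y j + Gi y 3 j * P y)) j (a, b, r)
        = r * pd2 (\<lambda>y. (rho2 y * sg y * v y j) * V3 y) j ?\<xi>"
    proof (rule pd3_tangential_separable_on_D[where c = "\<lambda>s. s", OF assms that])
      show "sG (a', b', r') * (rho (a', b', r') * V (a', b', r') 3 * V (a', b', r') j + Gi (a', b', r') 3 j * P (a', b', r'))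
          = r' * (rho2 (a', b') * sg (a', b') * v (a', b') j * V3 (a', b'))"
        if "(a', b') \<in> U" "r' > 0" for a' b' r'
        using that \<open>j \<in> {1, 2}\<close>
        by (auto simp: rho_eq sG_eq V_tangential_eq V3_eq Gi_eq field_simps power2_eq_square)
      show "(\<lambda>y. rho2 y * sg y * v y j * V3 y) differentiable (at ?\<xi>)"
        using mass_flux_diff[OF that] V3_diff[OF assms(1)] by (rule differentiable_mult)
    qed
    then show ?thesis
      using pd2_mult[OF mass_flux_diff[OF that] V3_diff[OF assms(1)]] by simp
  qed
  have radial: "pd3 (\<lambda>y. sG y * (rho y * V y 3 * V y 3 + Gi y 3 3 * P y)) 3 (a, b, r)
      = 2 * r * (sg ?\<xi> * (rho2 ?\<xi> * V3 ?\<xi> * V3 ?\<xi> + P2 ?\<xi>))"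
  proof (rule pd3_radial_separable_on_D[where c = "\<lambda>s. s\<^sup>2", OF assms])
    show "sG (a', b', r') * (rho (a', b', r') * V (a', b', r') 3 * V (a', b', r') 3 + Gi (a', b', r') 3 3 * P (a', b', r'))
        = r'\<^sup>2 * (sg (a', b') * (rho2 (a', b') * V3 (a', b') * V3 (a', b') + P2 (a', b')))"
      if "(a', b') \<in> U" "r' > 0" for a' b' r'
      using that by (simp add: rho_eq sG_eq V3_eq P_eq Gi_eq)
    show "((\<lambda>s. s\<^sup>2) has_real_derivative 2 * r) (at r)"
      by (auto intro!: derivative_eq_intros)
  qed
  have christoffel_terms: "(\<Sum>j\<in>{1..3}. \<Sum>k\<in>{1..3}. Gam3 G (a, b, r) 3 j k
        * (sG (a, b, r) * (rho (a, b, r) * V (a, b, r) k * V (a, b, r) j + Gi (a, b, r) k j * P (a, b, r))))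
      = - r * (g ?\<xi> 1 1 * ?S 1 1 + g ?\<xi> 1 2 * ?S 2 1 + g ?\<xi> 2 1 * ?S 1 2 + g ?\<xi> 2 2 * ?S 2 2)"
    unfolding sum_1_3 christoffel_G(6,7)[OF assms]
      christoffel_G(4)[OF assms j(1) j(1)] christoffel_G(4)[OF assms j(1) j(2)]
      christoffel_G(4)[OF assms j(2) j(1)] christoffel_G(4)[OF assms j(2) j(2)]
      stress_tangential_eq[OF assms j(1) j(1)] stress_tangential_eq[OF assms j(1) j(2)]
      stress_tangential_eq[OF assms j(2) j(1)] stress_tangential_eq[OF assms j(2) j(2)]
    by (simp add: algebra_simps)
  have trace: "g ?\<xi> 1 1 * ?S 1 1 + g ?\<xi> 1 2 * ?S 2 1 + g ?\<xi> 2 1 * ?S 1 2 + g ?\<xi> 2 2 * ?S 2 2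
      = sg ?\<xi> * rho2 ?\<xi> * qc2 ?\<xi> + 2 * sg ?\<xi> * P2 ?\<xi>"
  proof -
    have "g ?\<xi> 1 1 * ?S 1 1 + g ?\<xi> 1 2 * ?S 2 1 + g ?\<xi> 2 1 * ?S 1 2 + g ?\<xi> 2 2 * ?S 2 2
        = sg ?\<xi> * rho2 ?\<xi> * qc2 ?\<xi> + sg ?\<xi> * P2 ?\<xi>
            * ((g ?\<xi> 1 1 * gi ?\<xi> 1 1 + g ?\<xi> 1 2 * gi ?\<xi> 2 1) + (g ?\<xi> 2 1 * gi ?\<xi> 1 2 + g ?\<xi> 2 2 * gi ?\<xi> 2 2))"
      unfolding qc2_def sum_1_2 by (simp add: algebra_simps)
    then show ?thesis
      using g_gi_inverse[OF assms(1), of 1 1] g_gi_inverse[OF assms(1), of 2 2] by simp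
  qed
  show ?thesis
    unfolding cdiv_dens2_eq christoffel_terms trace
    unfolding sum_1_3 sum_1_2 tangential[OF j(1)] tangential[OF j(2)] radial
    by (simp add: algebra_simps)
qed

lemma ball_D_iff_ball_U:
  assumes "\<And>a b r. (a, b) \<in> U \<Longrightarrow> r > 0 \<Longrightarrow> L (a, b, r) \<longleftrightarrow> R (a, b)"
  shows "(\<forall>x\<in>D. L x) \<longleftrightarrow> (\<forall>\<xi>\<in>U. R \<xi>)"
proof
  assume L: "\<forall>x\<in>D. L x"
  show "\<forall>\<xi>\<in>U. R \<xi>"
  proof
    fix \<xi>
    assume "\<xi> \<in> U"
    then show "R \<xi>"
      using L assms[of "fst \<xi>" "snd \<xi>" 1] by (simp add: mem_D)
  qed
next
  assume R: "\<forall>\<xi>\<in>U. R \<xi>"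
  show "\<forall>x\<in>D. L x"
  proof
    fix x
    assume "x \<in> D"
    then show "L x"
      using R assms[of "fst x" "fst (snd x)" "snd (snd x)"] by (auto simp: D_def)
  qed
qed

lemma conical_reduction:
  "(\<forall>x\<in>D.
      cdiv_dens1 G (\<lambda>y j. rho y * sG y * V y j) x = 0
    \<and> (\<forall>i\<in>{1..3}. cdiv_dens2 G
          (\<lambda>y i j. sG y * (rho y * V y i * V y j + Gi y i j * P y)) x i = 0)
    \<and> cdiv_dens1 G (\<lambda>y j. sG y * (rho y * E y + P y) * V y j) x = 0)
  \<longleftrightarrow>
   (\<forall>xi\<in>U.
      (\<Sum>b\<in>{1..2}. pd2 (\<lambda>y. rho2 y * sg y * v y b) b xi)
        + 2 * rho2 xi * sg xi * V3 xi = 0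
    \<and> (\<forall>a\<in>{1..2}.
        (\<Sum>b\<in>{1..2}. pd2 (\<lambda>y. sg y * (rho2 y * v y a * v y b + gi y a b * P2 y)) b xi)
        + (\<Sum>c\<in>{1..2}. \<Sum>n\<in>{1..2}. Gam2 g xi a c n * sg xi
              * (rho2 xi * v xi c * v xi n + gi xi c n * P2 xi))
        + 3 * rho2 xi * sg xi * v xi a * V3 xi = 0)
    \<and> (\<Sum>a\<in>{1..2}. v xi a * pd2 V3 a xi) - qc2 xi = 0
    \<and> (\<Sum>b\<in>{1..2}. pd2 (\<lambda>y. sg y * (rho2 y * E2 y + P2 y) * v y b) b xi)
        + 2 * sg xi * (rho2 xi * E2 xi + P2 xi) * V3 xi = 0)"
proof (rule ball_D_iff_ball_U, goal_cases)
  case (1 a b r)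
  note ray = this
  have nonzero: "r \<noteq> 0" "rho2 (a, b) \<noteq> 0" "sg (a, b) \<noteq> 0"
    using ray rho_pos[rule_format, of "(a, b, 1)"] sg_pos[OF ray(1)] by (simp_all add: mem_D rho2_def)
  have j: "(1::nat) \<in> {1, 2}" "(2::nat) \<in> {1, 2}"
    by simp_all
  show ?case
    unfolding ball_1_3 ball_1_2 continuity_reduction[OF ray] energy_reduction[OF ray]
      momentum_radial_reduction[OF ray] momentum_tangential_reduction[OF ray j(1)]
      momentum_tangential_reduction[OF ray j(2)]
    using nonzero by auto
qed

end

theorem mainTheorem1:
  fixes U :: "pt2 set"
    and g :: "pt2 \<Rightarrow> nat \<Rightarrow> nat \<Rightarrow> real"
    and phi :: "pt2 \<Rightarrow> nat \<Rightarrow> real"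
    and rho e :: "pt3 \<Rightarrow> real"
    and V :: "pt3 \<Rightarrow> nat \<Rightarrow> real"
    and Pfun :: "real \<Rightarrow> real \<Rightarrow> real"
    and G :: "pt3 \<Rightarrow> nat \<Rightarrow> nat \<Rightarrow> real"
    and D :: "pt3 set"
    and sG :: "pt3 \<Rightarrow> real"
    and Gi :: "pt3 \<Rightarrow> nat \<Rightarrow> nat \<Rightarrow> real"
    and P :: "pt3 \<Rightarrow> real"
    and E :: "pt3 \<Rightarrow> real"
    and rho2 :: "pt2 \<Rightarrow> real"
    and e2 :: "pt2 \<Rightarrow> real"
    and v :: "pt2 \<Rightarrow> nat \<Rightarrow> real"
    and V3 :: "pt2 \<Rightarrow> real"
    and sg :: "pt2 \<Rightarrow> real"
    and gi :: "pt2 \<Rightarrow> nat \<Rightarrow> nat \<Rightarrow> real"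
    and qc2 :: "pt2 \<Rightarrow> real"
    and P2 :: "pt2 \<Rightarrow> real"
    and E2 :: "pt2 \<Rightarrow> real"
  assumes G_def: "G = cone_metric g"
    and D_def: "D = {(a, b, r). (a, b) \<in> U \<and> r > 0}"
    and sG_def: "sG = (\<lambda>x. sqrt (detn 3 (G x)))"
    and Gi_def: "Gi = (\<lambda>x. inv_metric 3 (G x))"
    and P_def: "P = (\<lambda>x. Pfun (rho x) (e x))"
    and E_def: "E = (\<lambda>x. e x + (1/2) * (\<Sum>i\<in>{1..3}. \<Sum>j\<in>{1..3}. G x i j * V x i * V x j))"
    and rho2_def: "rho2 = (\<lambda>xi. rho (fst xi, snd xi, 1))"
    and e2_def: "e2 = (\<lambda>xi. e (fst xi, snd xi, 1))"
    and v_def: "v = (\<lambda>xi b. 1 * V (fst xi, snd xi, 1) b)"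
    and V3_def: "V3 = (\<lambda>xi. V (fst xi, snd xi, 1) 3)"
    and sg_def: "sg = (\<lambda>xi. sqrt (detn 2 (g xi)))"
    and gi_def: "gi = (\<lambda>xi. inv_metric 2 (g xi))"
    and qc2_def: "qc2 = (\<lambda>xi. (\<Sum>a\<in>{1..2}. \<Sum>b\<in>{1..2}. g xi a b * v xi a * v xi b))"
    and P2_def: "P2 = (\<lambda>xi. Pfun (rho2 xi) (e2 xi))"
    and E2_def: "E2 = (\<lambda>xi. e2 xi + (1/2) * (qc2 xi + (V3 xi)\<^sup>2))"
    and U_open: "open U"
    (* g is the metric of the unit sphere in the surface coordinates xi *)
    and phi_diff: "\<forall>k\<in>{1..3}. \<forall>xi\<in>U. (\<lambda>y. phi y k) differentiable (at xi)"
    and phi_sphere: "\<forall>xi\<in>U. (\<Sum>k\<in>{1..3}. (phi xi k)\<^sup>2) = 1"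
    and g_phi: "\<forall>xi\<in>U. \<forall>a\<in>{1..2}. \<forall>b\<in>{1..2}.
                  g xi a b = (\<Sum>k\<in>{1..3}. pd2 (\<lambda>y. phi y k) a xi * pd2 (\<lambda>y. phi y k) b xi)"
    and g_pos: "\<forall>xi\<in>U. detn 2 (g xi) > 0"
    and g_diff: "\<forall>a\<in>{1..2}. \<forall>b\<in>{1..2}. \<forall>xi\<in>U. (\<lambda>y. g y a b) differentiable (at xi)"
    (* smoothness of the flow fields and of the equation of state *)
    and rho_diff: "\<forall>x\<in>D. rho differentiable (at x)"
    and e_diff: "\<forall>x\<in>D. e differentiable (at x)"
    and V_diff: "\<forall>i\<in>{1..3}. \<forall>x\<in>D. (\<lambda>y. V y i) differentiable (at x)"
    and P_diff: "\<forall>z. (\<lambda>z. Pfun (fst z) (snd z)) differentiable (at z)"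
    and rho_pos: "\<forall>x\<in>D. rho x > 0"
    (* conical assumption: vanishing covariant derivative in the radial direction *)
    and conical_rho: "\<forall>x\<in>D. pd3 rho 3 x = 0"
    and conical_e: "\<forall>x\<in>D. pd3 e 3 x = 0"
    and conical_V: "\<forall>x\<in>D. \<forall>i\<in>{1..3}.
                      pd3 (\<lambda>y. V y i) 3 x + (\<Sum>k\<in>{1..3}. Gam3 G x i 3 k * V x k) = 0"
  shows "(\<forall>x\<in>D.
            cdiv_dens1 G (\<lambda>y j. rho y * sG y * V y j) x = 0
          \<and> (\<forall>i\<in>{1..3}. cdiv_dens2 G
                (\<lambda>y i j. sG y * (rho y * V y i * V y j + Gi y i j * P y)) x i = 0)
          \<and> cdiv_dens1 G (\<lambda>y j. sG y * (rho y * E y + P y) * V y j) x = 0)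
      \<longleftrightarrow>
         (\<forall>xi\<in>U.
            (\<Sum>b\<in>{1..2}. pd2 (\<lambda>y. rho2 y * sg y * v y b) b xi)
              + 2 * rho2 xi * sg xi * V3 xi = 0
          \<and> (\<forall>a\<in>{1..2}.
              (\<Sum>b\<in>{1..2}. pd2 (\<lambda>y. sg y * (rho2 y * v y a * v y b + gi y a b * P2 y)) b xi)
              + (\<Sum>c\<in>{1..2}. \<Sum>n\<in>{1..2}. Gam2 g xi a c n * sg xi
                    * (rho2 xi * v xi c * v xi n + gi xi c n * P2 xi))
              + 3 * rho2 xi * sg xi * v xi a * V3 xi = 0)
          \<and> (\<Sum>a\<in>{1..2}. v xi a * pd2 V3 a xi) - qc2 xi = 0
          \<and> (\<Sum>b\<in>{1..2}. pd2 (\<lambda>y. sg y * (rho2 y * E2 y + P2 y) * v y b) b xi)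
              + 2 * sg xi * (rho2 xi * E2 xi + P2 xi) * V3 xi = 0)"
proof -
  \<comment> \<open>the embedding \<open>phi\<close> enters only through the symmetry of its Gram matrix \<open>g\<close>\<close>
  have g_sym: "\<forall>xi\<in>U. g xi 2 1 = g xi 1 2"
    using g_phi by (auto simp: mult.commute)
  interpret conical_flow U g rho e V Pfun G D sG Gi P E rho2 e2 v V3 sg gi qc2 P2 E2
    by (rule conical_flow.intro) (fact assms g_sym)+
  show ?thesis
    by (rule conical_reduction)
qed

end
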